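(* Let $\pi:(X,T)\to(Y,S)$ be a factor map and let $y_0\in\mathrm{Eq}(Y,S)$ be a minimal point of $(Y,S)$ such that $\pi^{-1}(y_0)=\{x_0\}$. Then $x_0\in\mathrm{Eq}_{\mathrm{syn}}(X,T)$. In particular, $(X,T)$ is not thickly sensitive.
   Context: Systems: compact metric space with continuous surjection; factor map: continuous surjection intertwining the maps. $\mathrm{Eq}(Y,S)$ is the set of equicontinuity points: $y$ such that for every $\varepsilon>0$ there is $\delta>0$ with $\varrho_Y(y,y')<\delta\Rightarrow\varrho_Y(S^ny,S^ny')<\varepsilon$ for all $n\in\mathbb N$. A point is minimal if it lies in a minimal subset (a nonempty closed invariant set all of whose orbits are dense in it). $S_T(U,\delta)=\{n\in\mathbb{N}:\exists x_1,x_2\in U,\ \varrho(T^nx_1,T^nx_2)>\delta\}$, $J_T(U,\delta)=\mathbb N\setminus S_T(U,\delta)$. $\mathrm{Eq}_{\mathrm{syn}}(X,T)$: points $x$ such that for every $\varepsilon>0$ there is a neighborhood $U$ of $x$ with $J_T(U,\varepsilon)$ syndetic (bounded gaps). Thickly sensitive: there is $\delta>0$ with $S_T(U,\delta)$ thick (arbitrarily long blocks of consecutive integers) for every opene $U$. *)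

theory Defs
  imports "HOL-Analysis.Analysis"
begin

definition tds :: "'a::metric_space set \<Rightarrow> ('a \<Rightarrow> 'a) \<Rightarrow> bool" where
  "tds X T \<longleftrightarrow> compact X \<and> continuous_on X T \<and> T ` X = X"

definition factor_map ::
  "'a::metric_space set \<Rightarrow> ('a \<Rightarrow> 'a) \<Rightarrow> 'b::metric_space set \<Rightarrow> ('b \<Rightarrow> 'b) \<Rightarrow> ('a \<Rightarrow> 'b) \<Rightarrow> bool" where
  "factor_map X T Y S \<pi> \<longleftrightarrow> tds X T \<and> tds Y S \<and> continuous_on X \<pi> \<and> \<pi> ` X = Y
     \<and> (\<forall>x\<in>X. \<pi> (T x) = S (\<pi> x))"

definition eq_points :: "'a::metric_space set \<Rightarrow> ('a \<Rightarrow> 'a) \<Rightarrow> 'a set" where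
  "eq_points Y S = {y\<in>Y. \<forall>\<epsilon>>0. \<exists>\<delta>>0. \<forall>y'\<in>Y. dist y y' < \<delta> \<longrightarrow>
      (\<forall>n::nat. dist ((S^^n) y) ((S^^n) y') < \<epsilon>)}"

definition orbit :: "('a \<Rightarrow> 'a) \<Rightarrow> 'a \<Rightarrow> 'a set" where
  "orbit S y = {(S^^n) y | n. True}"

definition minimal_subset :: "'a::metric_space set \<Rightarrow> ('a \<Rightarrow> 'a) \<Rightarrow> 'a set \<Rightarrow> bool" where
  "minimal_subset Y S M \<longleftrightarrow> M \<noteq> {} \<and> M \<subseteq> Y \<and> closed M \<and> S ` M \<subseteq> M
      \<and> (\<forall>y\<in>M. closure (orbit S y) = M)"

definition minimal_point :: "'a::metric_space set \<Rightarrow> ('a \<Rightarrow> 'a) \<Rightarrow> 'a \<Rightarrow> bool" where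
  "minimal_point Y S y \<longleftrightarrow> (\<exists>M. minimal_subset Y S M \<and> y \<in> M)"

definition S_set :: "('a::metric_space \<Rightarrow> 'a) \<Rightarrow> 'a set \<Rightarrow> real \<Rightarrow> nat set" where
  "S_set T U \<delta> = {n. \<exists>x1\<in>U. \<exists>x2\<in>U. dist ((T^^n) x1) ((T^^n) x2) > \<delta>}"

definition J_set :: "('a::metric_space \<Rightarrow> 'a) \<Rightarrow> 'a set \<Rightarrow> real \<Rightarrow> nat set" where
  "J_set T U \<delta> = UNIV - S_set T U \<delta>"

definition syndetic :: "nat set \<Rightarrow> bool" where
  "syndetic A \<longleftrightarrow> (\<exists>L>0. \<forall>n. \<exists>m\<in>A. n \<le> m \<and> m < n + L)"

definition thick :: "nat set \<Rightarrow> bool" where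
  "thick A \<longleftrightarrow> (\<forall>L. \<exists>n. {n..<n+L} \<subseteq> A)"

definition eq_syn_points :: "'a::metric_space set \<Rightarrow> ('a \<Rightarrow> 'a) \<Rightarrow> 'a set" where
  "eq_syn_points X T = {x\<in>X. \<forall>\<epsilon>>0. \<exists>U. openin (top_of_set X) U \<and> x \<in> U
      \<and> syndetic (J_set T U \<epsilon>)}"

definition thickly_sensitive :: "'a::metric_space set \<Rightarrow> ('a \<Rightarrow> 'a) \<Rightarrow> bool" where
  "thickly_sensitive X T \<longleftrightarrow> (\<exists>\<delta>>0. \<forall>U. openin (top_of_set X) U \<and> U \<noteq> {}
      \<longrightarrow> thick (S_set T U \<delta>))"

end

theory Submission
  imports Defs
begin

text \<open>Points of a minimal set are uniformly recurrent, and equicontinuity of \<open>y0\<close> makes the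
  orbits of all points near \<open>y0\<close> follow the orbit of \<open>y0\<close>; so at the (syndetically many) return
  times of \<open>y0\<close>, a whole neighbourhood of \<open>y0\<close> is mapped close to \<open>y0\<close>. Because the fibre over
  \<open>y0\<close> is the single point \<open>x0\<close>, compactness turns "the image is close to \<open>y0\<close>" into "the point
  is close to \<open>x0\<close>", so at those times the preimage of that neighbourhood has small diameter.
  A syndetic set meets every thick set, which rules out thick sensitivity.\<close>

lemma funpow_in: "T ` X \<subseteq> X \<Longrightarrow> x \<in> X \<Longrightarrow> (T^^n) x \<in> X"
  by (induction n) auto

lemma funpow_semiconj:
  assumes "T ` X \<subseteq> X" "\<forall>x\<in>X. \<pi> (T x) = S (\<pi> x)" "x \<in> X"
  shows "\<pi> ((T^^n) x) = (S^^n) (\<pi> x)"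
  using assms by (induction n) (auto simp: funpow_in)

lemma continuous_on_funpow:
  assumes "continuous_on M S" "S ` M \<subseteq> M"
  shows "continuous_on M (S^^n)"
proof (induction n)
  case (Suc n)
  have "continuous_on M (S \<circ> (S^^n))"
    using funpow_in[OF assms(2)]
    by (intro continuous_on_compose Suc.IH continuous_on_subset[OF assms(1)]) auto
  then show ?case by (simp add: o_def)
qed (simp add: continuous_on_id)

lemma syndetic_mono: "A \<subseteq> B \<Longrightarrow> syndetic A \<Longrightarrow> syndetic B"
  unfolding syndetic_def by (meson subsetD)

lemma syndetic_Compl_not_thick: "syndetic (UNIV - A) \<Longrightarrow> \<not> thick A"
  unfolding syndetic_def thick_def by (metis Diff_iff atLeastLessThan_iff subsetD)

lemma J_set_if_near_point:
  assumes "\<And>x. x \<in> U \<Longrightarrow> dist ((T^^n) x) p < e/2"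
  shows "n \<in> J_set T U e"
proof -
  have "dist ((T^^n) x1) ((T^^n) x2) < e" if "x1 \<in> U" "x2 \<in> U" for x1 x2
    using assms[OF that(1)] assms[OF that(2)] dist_triangle_half_l by blast
  then show ?thesis unfolding J_set_def S_set_def by force
qed

lemma minimal_subset_return_times_syndetic:
  assumes M: "minimal_subset Y S M" and "compact Y" "continuous_on Y S"
    and y: "y \<in> M" and "r > 0"
  shows "syndetic {n. dist ((S^^n) y) y < r}"
proof -
  have MY: "M \<subseteq> Y" and SM: "S ` M \<subseteq> M" and dense: "\<forall>z\<in>M. closure (orbit S z) = M"
    and "closed M" using M unfolding minimal_subset_def by auto
  have "compact M" using compact_Int_closed[OF \<open>compact Y\<close> \<open>closed M\<close>] MY by (simp add: Int_absorb1)
  have "\<exists>G. open G \<and> G \<inter> M = (S^^n) -` ball y r \<inter> M" for n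
    using continuous_on_funpow[OF continuous_on_subset[OF \<open>continuous_on Y S\<close> MY] SM]
    unfolding continuous_on_open_invariant by auto
  then obtain G where G: "\<And>n. open (G n) \<and> G n \<inter> M = (S^^n) -` ball y r \<inter> M"
    by metis
  have cover: "M \<subseteq> (\<Union>n. G n)"
  proof
    fix z assume "z \<in> M"
    then have "y \<in> closure (orbit S z)" using dense y by auto
    then obtain w where "w \<in> orbit S z" "dist w y < r" using \<open>r > 0\<close> closure_approachable by metis
    then obtain n where "dist ((S^^n) z) y < r" unfolding orbit_def by auto
    then show "z \<in> (\<Union>n. G n)" using G[of n] \<open>z \<in> M\<close> by (auto simp: dist_commute)
  qed
  then obtain C where C: "finite C" "M \<subseteq> (\<Union>c\<in>C. G c)"
    using compactE_image[OF \<open>compact M\<close>, of UNIV G] G cover by (metis subset_UNIV)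
  show ?thesis unfolding syndetic_def
  proof (intro exI[of _ "Suc (Max C)"] conjI allI)
    fix k
    have "(S^^k) y \<in> M" using funpow_in[OF SM y] .
    then obtain c where c: "c \<in> C" "(S^^k) y \<in> G c" using C by auto
    then have "dist ((S^^(c + k)) y) y < r"
      using G[of c] \<open>(S^^k) y \<in> M\<close> by (auto simp: funpow_add dist_commute)
    moreover have "c < Suc (Max C)" using Max_ge[OF C(1) c(1)] by simp
    ultimately show "\<exists>m\<in>{n. dist ((S^^n) y) y < r}. k \<le> m \<and> m < k + Suc (Max C)"
      by (intro bexI[of _ "c + k"]) auto
  qed simp
qed

lemma singleton_fibre_uniformly_small:
  fixes \<pi> :: "'a::metric_space \<Rightarrow> 'b::metric_space"
  assumes "compact X" "continuous_on X \<pi>" and fibre: "{x\<in>X. \<pi> x = y0} = {x0}" and "e > 0"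
  shows "\<exists>\<eta>>0. \<forall>x\<in>X. dist (\<pi> x) y0 < \<eta> \<longrightarrow> dist x x0 < e"
proof -
  define K where "K = X \<inter> {x. e \<le> dist x x0}"
  have "closed {x. e \<le> dist x x0}"
    by (intro closed_Collect_le continuous_intros)
  then have "compact K" unfolding K_def using compact_Int_closed[OF \<open>compact X\<close>] by blast
  moreover have "continuous_on K \<pi>"
    using continuous_on_subset[OF \<open>continuous_on X \<pi>\<close>] by (simp add: K_def)
  ultimately have "closed (\<pi> ` K)" by (intro compact_imp_closed compact_continuous_image)
  moreover have "y0 \<notin> \<pi> ` K"
  proof
    assume "y0 \<in> \<pi> ` K"
    then obtain x where "x \<in> K" "\<pi> x = y0" by auto
    then have "x = x0" using fibre unfolding K_def by blast
    with \<open>x \<in> K\<close> \<open>e > 0\<close> show False unfolding K_def by auto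
  qed
  ultimately have "open (- (\<pi> ` K))" "y0 \<in> - (\<pi> ` K)" by auto
  then obtain \<eta> where "\<eta> > 0" and \<eta>: "ball y0 \<eta> \<subseteq> - (\<pi> ` K)"
    using open_contains_ball by blast
  show ?thesis
  proof (intro exI[of _ \<eta>] conjI ballI impI)
    fix x assume "x \<in> X" "dist (\<pi> x) y0 < \<eta>"
    then have "x \<notin> K" using \<eta> by (auto simp: dist_commute)
    then show "dist x x0 < e" using \<open>x \<in> X\<close> by (simp add: K_def)
  qed fact
qed

lemma eq_syn_point_if_singleton_fibre:
  assumes fm: "factor_map X T Y S \<pi>" and "y0 \<in> eq_points Y S" and "minimal_point Y S y0"
    and fibre: "{x\<in>X. \<pi> x = y0} = {x0}"
  shows "x0 \<in> eq_syn_points X T"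
proof -
  have "compact X" and TX: "T ` X \<subseteq> X" and "compact Y" "continuous_on Y S"
    and "continuous_on X \<pi>" and "\<pi> ` X = Y" and comm: "\<forall>x\<in>X. \<pi> (T x) = S (\<pi> x)"
    using fm unfolding factor_map_def tds_def by auto
  have x0: "x0 \<in> X" "\<pi> x0 = y0" using fibre by auto
  obtain M where M: "minimal_subset Y S M" "y0 \<in> M"
    using \<open>minimal_point Y S y0\<close> unfolding minimal_point_def by blast
  have "\<exists>U. openin (top_of_set X) U \<and> x0 \<in> U \<and> syndetic (J_set T U e)" if "e > 0" for e
  proof -
    obtain \<eta> where "\<eta> > 0" and \<eta>: "\<forall>x\<in>X. dist (\<pi> x) y0 < \<eta> \<longrightarrow> dist x x0 < e/2"
      using singleton_fibre_uniformly_small[OF \<open>compact X\<close> \<open>continuous_on X \<pi>\<close> fibre] \<open>e > 0\<close>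
      by (metis half_gt_zero)
    obtain \<delta> where "\<delta> > 0"
      and \<delta>: "\<forall>y\<in>Y. dist y0 y < \<delta> \<longrightarrow> (\<forall>n. dist ((S^^n) y0) ((S^^n) y) < \<eta>/2)"
      using \<open>y0 \<in> eq_points Y S\<close> \<open>\<eta> > 0\<close> unfolding eq_points_def by (auto dest: half_gt_zero)
    define U where "U = X \<inter> \<pi> -` ball y0 \<delta>"
    have "{n. dist ((S^^n) y0) y0 < \<eta>/2} \<subseteq> J_set T U e"
    proof
      fix n assume return: "n \<in> {n. dist ((S^^n) y0) y0 < \<eta>/2}"
      have near_x0: "dist ((T^^n) x) x0 < e/2" if "x \<in> U" for x
      proof -
        have "x \<in> X" "dist y0 (\<pi> x) < \<delta>" using that by (auto simp: U_def)
        moreover have "\<pi> x \<in> Y" using \<open>x \<in> X\<close> \<open>\<pi> ` X = Y\<close> by blast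
        ultimately have "dist ((S^^n) y0) ((S^^n) (\<pi> x)) < \<eta>/2" using \<delta> by blast
        then have "dist ((S^^n) (\<pi> x)) y0 < \<eta>"
          using return dist_triangle_half_r[of "(S^^n) y0" "(S^^n) (\<pi> x)" \<eta> y0] by simp
        then show ?thesis
          using \<eta> funpow_in[OF TX \<open>x \<in> X\<close>] funpow_semiconj[OF TX comm \<open>x \<in> X\<close>] by simp
      qed
      then show "n \<in> J_set T U e" by (rule J_set_if_near_point)
    qed
    moreover have "syndetic {n. dist ((S^^n) y0) y0 < \<eta>/2}"
      using minimal_subset_return_times_syndetic[OF M(1) \<open>compact Y\<close> \<open>continuous_on Y S\<close> M(2), of "\<eta>/2"]
        \<open>\<eta> > 0\<close> by simp
    moreover have "openin (top_of_set X) U"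
      unfolding U_def using \<open>continuous_on X \<pi>\<close> by (rule continuous_openin_preimage_gen) simp
    moreover have "x0 \<in> U" using x0 \<open>\<delta> > 0\<close> by (simp add: U_def)
    ultimately show ?thesis by (meson syndetic_mono)
  qed
  then show ?thesis using x0 unfolding eq_syn_points_def by auto
qed

lemma not_thickly_sensitive_if_eq_syn_point:
  assumes "x \<in> eq_syn_points X T"
  shows "\<not> thickly_sensitive X T"
proof
  assume "thickly_sensitive X T"
  then obtain \<delta> where "\<delta> > 0"
    and thick: "\<forall>U. openin (top_of_set X) U \<and> U \<noteq> {} \<longrightarrow> thick (S_set T U \<delta>)"
    unfolding thickly_sensitive_def by auto
  obtain U where "openin (top_of_set X) U" "x \<in> U" "syndetic (J_set T U \<delta>)"
    using assms \<open>\<delta> > 0\<close> unfolding eq_syn_points_def by auto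
  then show False
    using thick syndetic_Compl_not_thick unfolding J_set_def by blast
qed

theorem lemma4p1:
  fixes X :: "'a::metric_space set" and T :: "'a \<Rightarrow> 'a"
    and Y :: "'b::metric_space set" and S :: "'b \<Rightarrow> 'b"
    and \<pi> :: "'a \<Rightarrow> 'b" and x0 :: 'a and y0 :: 'b
  assumes "factor_map X T Y S \<pi>"
    and "y0 \<in> eq_points Y S"
    and "minimal_point Y S y0"
    and "{x\<in>X. \<pi> x = y0} = {x0}"
  shows "x0 \<in> eq_syn_points X T \<and> \<not> thickly_sensitive X T"
  using eq_syn_point_if_singleton_fibre[OF assms] not_thickly_sensitive_if_eq_syn_point by blast

end
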